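(* Let $E\subset\Delta_n$ be a finite set and suppose the market weight sequence $\{\mu(t)\}_{t\ge0}$ takes values in $E$. Let $\Theta=(\overline{\Delta}_n)^E$ be the set of all portfolio maps $\pi:E\to\overline{\Delta}_n$, with the topology of uniform (equivalently pointwise) convergence. Suppose the empirical measures $\mathbb P_t$ converge weakly to a probability measure $\mathbb P$ on $E\times E$. Then for each $\pi\in\Theta$ the limit $W(\pi)=\lim_{t\to\infty}\frac1t\log V_\pi(t)$ exists and equals $\int_{E\times E}\ell_\pi\,d\mathbb P$. Moreover there exists $\pi^*\in\Theta$ with $W(\pi^* )=W^*:=\max_{\pi\in\Theta}W(\pi)$, and writing $\mathbb P(p,q)=\mathbb P_1(p)\mathbb P_2(q\mid p)$ with $\mathbb P_1$ the first marginal and $\mathbb P_2$ the conditional distribution, such a $\pi^*$ satisfies $\pi^*(p)\in\operatorname{argmax}_{x\in\overline{\Delta}_n}\int_E\log\left(x\cdot\frac{q}{p}\right)\mathbb P_2(dq\mid p)$ for every $p$ with $\mathbb P_1(p)>0$.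
   Context: $\Delta_n=\{p\in(0,1)^n:\sum_ip_i=1\}$, $\overline{\Delta}_n$ its closure in the hyperplane $\sum_ip_i=1$ ($n\ge2$). For a portfolio map $\pi$, the relative value is $V_\pi(0)=1$, $V_\pi(t+1)=V_\pi(t)\,\pi(\mu(t))\cdot\frac{\mu(t+1)}{\mu(t)}$, where $a\cdot b$ is the Euclidean inner product and $a/b$ the componentwise ratio. $\ell_\pi(p,q)=\log\left(\pi(p)\cdot\frac qp\right)$, and $\mathbb P_t=\frac1t\sum_{s=0}^{t-1}\delta_{(\mu(s),\mu(s+1))}$. *)

theory Defs
  imports "HOL-Analysis.Analysis" "HOL-Probability.Probability"
begin

definition open_simplex :: "(real^'n) set" where
  "open_simplex = {p. (\<forall>i. 0 < p $ i) \<and> sum (\<lambda>i. p $ i) UNIV = 1}"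

definition closed_simplex :: "(real^'n) set" where
  "closed_simplex = {p. (\<forall>i. 0 \<le> p $ i) \<and> sum (\<lambda>i. p $ i) UNIV = 1}"

definition vratio :: "real^'n \<Rightarrow> real^'n \<Rightarrow> real^'n" where
  "vratio a b = (\<chi> i. a $ i / b $ i)"

definition portfolio_maps :: "(real^'n) set \<Rightarrow> (real^'n \<Rightarrow> real^'n) set" where
  "portfolio_maps E = (E \<rightarrow>\<^sub>E closed_simplex)"

fun rel_value :: "(real^'n \<Rightarrow> real^'n) \<Rightarrow> (nat \<Rightarrow> real^'n) \<Rightarrow> nat \<Rightarrow> real" where
  "rel_value \<pi> \<mu> 0 = 1"
| "rel_value \<pi> \<mu> (Suc t) = rel_value \<pi> \<mu> t * (\<pi> (\<mu> t) \<bullet> vratio (\<mu> (Suc t)) (\<mu> t))"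

definition ell :: "(real^'n \<Rightarrow> real^'n) \<Rightarrow> real^'n \<Rightarrow> real^'n \<Rightarrow> real" where
  "ell \<pi> p q = ln (\<pi> p \<bullet> vratio q p)"

definition growth :: "(real^'n \<Rightarrow> real^'n) \<Rightarrow> (nat \<Rightarrow> real^'n) \<Rightarrow> real" where
  "growth \<pi> \<mu> = lim (\<lambda>t. ln (rel_value \<pi> \<mu> t) / real t)"

text \<open>Empirical measure P_t = (1/t) sum_{s<t} delta_(mu s, mu (s+1)) (meaningful for t >= 1).\<close>
definition emp_measure :: "(nat \<Rightarrow> real^'n) \<Rightarrow> nat \<Rightarrow> ((real^'n) \<times> (real^'n)) pmf" where
  "emp_measure \<mu> t = map_pmf (\<lambda>s. (\<mu> s, \<mu> (Suc s))) (pmf_of_set {..<t})"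

definition weak_conv_on :: "'a::topological_space set \<Rightarrow> (nat \<Rightarrow> 'a pmf) \<Rightarrow> 'a pmf \<Rightarrow> bool" where
  "weak_conv_on S Q R \<longleftrightarrow>
     (\<forall>f :: 'a \<Rightarrow> real. continuous_on S f \<and> bounded (f ` S) \<longrightarrow>
        (\<lambda>t. measure_pmf.expectation (Q t) f) \<longlonglongrightarrow> measure_pmf.expectation R f)"

definition cond_second :: "('a \<times> 'a) pmf \<Rightarrow> 'a \<Rightarrow> 'a pmf" where
  "cond_second P p = map_pmf snd (cond_pmf P {pq. fst pq = p})"

end

theory Submission
  imports Defs
begin

text \<open>Since \<open>\<mu>\<close> lives in the finite set \<open>E\<close>, every \<open>\<ell>\<^sub>\<pi>\<close> is a bounded continuous
  function on \<open>E \<times> E\<close>, and \<open>log V\<^sub>\<pi>(t)/t\<close> is exactly the integral of \<open>\<ell>\<^sub>\<pi>\<close> against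
  \<open>\<^bold>P\<^sub>t\<close>; weak convergence thus gives \<open>W(\<pi>) = \<integral> \<ell>\<^sub>\<pi> d\<^bold>P\<close>. This integral splits as a sum over
  \<open>p \<in> E\<close> of terms depending only on \<open>\<pi>(p)\<close>, so \<open>W\<close> is maximised by maximising each term
  separately over the compact simplex, and a maximiser of \<open>W\<close> must maximise every term; the
  term at \<open>p\<close> is \<open>\<^bold>P\<^sub>1(p)\<close> times the conditional expected log-return.\<close>

lemma closed_simplex_inner_pos:
  assumes "x \<in> closed_simplex" and "\<And>i. 0 < v $ i"
  shows "0 < x \<bullet> v"
proof -
  have nonneg: "\<And>i. 0 \<le> x $ i" and "(\<Sum>i\<in>UNIV. x $ i) = 1"
    using assms(1) by (auto simp: closed_simplex_def)
  then obtain j where "x $ j \<noteq> 0" by force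
  hence "0 < x $ j * v $ j" using nonneg assms(2) by (simp add: order_less_le)
  also have "\<dots> \<le> (\<Sum>i\<in>UNIV. x $ i * v $ i)"
    by (rule member_le_sum) (use nonneg assms(2) in \<open>auto intro: less_imp_le mult_nonneg_nonneg\<close>)
  finally show ?thesis by (simp add: inner_vec_def)
qed

lemma vratio_pos:
  assumes "p \<in> open_simplex" and "q \<in> open_simplex"
  shows "0 < vratio q p $ i"
  using assms by (auto simp: open_simplex_def vratio_def)

lemma compact_closed_simplex: "compact (closed_simplex :: (real^'n) set)"
  unfolding compact_eq_bounded_closed
proof
  show "bounded (closed_simplex :: (real^'n) set)"
  proof (rule boundedI[of _ 1])
    fix p :: "real^'n" assume "p \<in> closed_simplex"
    then have "(\<Sum>i\<in>UNIV. \<bar>p $ i\<bar>) = 1" by (simp add: closed_simplex_def)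
    then show "norm p \<le> 1" using norm_le_l1_cart[of p] by simp
  qed
  have "closed_simplex = {p::real^'n. \<forall>i. 0 \<le> p $ i} \<inter> {p. (\<Sum>i\<in>UNIV. p $ i) = 1}"
    by (auto simp: closed_simplex_def)
  also have "closed \<dots>"
    by (intro closed_Int closed_Collect_all closed_Collect_le closed_Collect_eq continuous_intros)
  finally show "closed (closed_simplex :: (real^'n) set)" .
qed

lemma closed_simplex_nonempty: "(closed_simplex :: (real^'n) set) \<noteq> {}"
proof -
  have "(\<chi> i. 1 / real CARD('n)) \<in> (closed_simplex :: (real^'n) set)"
    by (simp add: closed_simplex_def)
  thus ?thesis by blast
qed

lemma portfolio_return_pos:
  assumes "\<pi> \<in> portfolio_maps E" and "E \<subseteq> open_simplex" and "p \<in> E" and "q \<in> E"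
  shows "0 < \<pi> p \<bullet> vratio q p"
proof -
  have "\<pi> p \<in> closed_simplex" using assms(1,3) by (auto simp: portfolio_maps_def)
  with assms(2-4) show ?thesis by (blast intro: closed_simplex_inner_pos vratio_pos)
qed

lemma ln_rel_value_eq_sum_ell:
  assumes "\<pi> \<in> portfolio_maps E" and "E \<subseteq> open_simplex" and "\<And>t. \<mu> t \<in> E"
  shows "0 < rel_value \<pi> \<mu> t \<and> ln (rel_value \<pi> \<mu> t) = (\<Sum>s<t. ell \<pi> (\<mu> s) (\<mu> (Suc s)))"
proof (induction t)
  case (Suc t)
  have "0 < \<pi> (\<mu> t) \<bullet> vratio (\<mu> (Suc t)) (\<mu> t)"
    using portfolio_return_pos assms by blast
  with Suc show ?case by (simp add: ln_mult ell_def)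
qed simp

lemma expectation_emp_measure:
  "measure_pmf.expectation (emp_measure \<mu> (Suc t)) (f :: _ \<Rightarrow> real)
     = (\<Sum>s<Suc t. f (\<mu> s, \<mu> (Suc s))) / real (Suc t)"
  unfolding emp_measure_def integral_map_pmf
  by (subst integral_pmf_of_set) auto

lemma log_rel_value_tendsto_expectation_ell:
  assumes "finite E" and "E \<subseteq> open_simplex" and "\<And>t. \<mu> t \<in> E"
    and "weak_conv_on (E \<times> E) (\<lambda>t. emp_measure \<mu> (Suc t)) P"
    and "\<pi> \<in> portfolio_maps E"
  shows "(\<lambda>t. ln (rel_value \<pi> \<mu> t) / real t) \<longlonglongrightarrow>
           measure_pmf.expectation P (\<lambda>(p, q). ell \<pi> p q)"
proof -
  let ?f = "\<lambda>(p, q). ell \<pi> p q"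
  have "continuous_on (E \<times> E) ?f" and "bounded (?f ` (E \<times> E))"
    using assms(1) by (auto intro: continuous_on_finite finite_imp_bounded)
  then have "(\<lambda>t. measure_pmf.expectation (emp_measure \<mu> (Suc t)) ?f) \<longlonglongrightarrow>
               measure_pmf.expectation P ?f"
    using assms(4) unfolding weak_conv_on_def by blast
  moreover have "measure_pmf.expectation (emp_measure \<mu> (Suc t)) ?f
                   = ln (rel_value \<pi> \<mu> (Suc t)) / real (Suc t)" for t
    using ln_rel_value_eq_sum_ell[of \<pi> E \<mu> "Suc t"] assms(2,3,5)
    by (simp add: expectation_emp_measure)
  ultimately show ?thesis by (simp add: LIMSEQ_imp_Suc)
qed

definition row_growth :: "((real^'n) \<times> (real^'n)) pmf \<Rightarrow> (real^'n) set \<Rightarrow> real^'n \<Rightarrow> real^'n \<Rightarrow> real"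
  where "row_growth P E p x = (\<Sum>q\<in>E. pmf P (p, q) * ln (x \<bullet> vratio q p))"

lemma expectation_ell_eq_sum_row_growth:
  assumes "finite E" and "set_pmf P \<subseteq> E \<times> E"
  shows "measure_pmf.expectation P (\<lambda>(p, q). ell \<pi> p q) = (\<Sum>p\<in>E. row_growth P E p (\<pi> p))"
proof -
  have "measure_pmf.expectation P (\<lambda>(p, q). ell \<pi> p q)
      = (\<Sum>a\<in>E \<times> E. (case a of (p, q) \<Rightarrow> ell \<pi> p q) * pmf P a)"
    by (rule integral_measure_pmf_real) (use assms in auto)
  also have "\<dots> = (\<Sum>p\<in>E. row_growth P E p (\<pi> p))"
    by (simp add: sum.cartesian_product split_beta row_growth_def ell_def mult.commute)
  finally show ?thesis .
qed

lemma continuous_on_row_growth: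
  assumes "E \<subseteq> open_simplex" and "p \<in> E"
  shows "continuous_on closed_simplex (row_growth P E p)"
proof -
  have "x \<bullet> vratio q p \<noteq> 0" if "q \<in> E" and "x \<in> closed_simplex" for q x
    using that assms closed_simplex_inner_pos vratio_pos by (metis less_irrefl subsetD)
  then show ?thesis unfolding row_growth_def
    by (intro continuous_on_sum continuous_on_mult continuous_on_const continuous_on_ln
        continuous_on_inner continuous_on_id) auto
qed

lemma expectation_cond_second:
  assumes "finite E" and "set_pmf P \<subseteq> E \<times> E" and "pmf (map_pmf fst P) p > 0"
  shows "measure_pmf.expectation (cond_second P p) (g :: _ \<Rightarrow> real)
           = (\<Sum>q\<in>E. pmf P (p, q) * g q) / pmf (map_pmf fst P) p"
proof -
  let ?S = "{pq. fst pq = p}"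
  have "p \<in> set_pmf (map_pmf fst P)" using assms(3) by (metis less_irrefl set_pmf_iff)
  then have nonempty: "set_pmf P \<inter> ?S \<noteq> {}" by force
  have "measure_pmf.prob P ?S = pmf (map_pmf fst P) p"
    by (simp add: pmf_map vimage_def)
  then have cond: "pmf (cond_pmf P ?S) (p, q) = pmf P (p, q) / pmf (map_pmf fst P) p" for q
    by (simp add: pmf_cond[OF nonempty])
  have "measure_pmf.expectation (cond_second P p) g
      = (\<Sum>a\<in>Pair p ` E. g (snd a) * pmf (cond_pmf P ?S) a)"
    unfolding cond_second_def integral_map_pmf
    by (rule integral_measure_pmf_real) (use assms nonempty in auto)
  also have "\<dots> = (\<Sum>q\<in>E. g q * (pmf P (p, q) / pmf (map_pmf fst P) p))"
    by (simp add: sum.reindex inj_on_def cond)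
  finally show ?thesis by (simp add: sum_divide_distrib mult.commute)
qed

lemma PiE_sum_argmax_exists:
  fixes G :: "'a \<Rightarrow> 'b \<Rightarrow> real"
  assumes "\<And>p. p \<in> E \<Longrightarrow> \<exists>x\<in>S. \<forall>y\<in>S. G p y \<le> G p x"
  shows "\<exists>\<sigma>\<in>E \<rightarrow>\<^sub>E S. \<forall>\<pi>\<in>E \<rightarrow>\<^sub>E S. (\<Sum>p\<in>E. G p (\<pi> p)) \<le> (\<Sum>p\<in>E. G p (\<sigma> p))"
proof -
  define \<sigma> where "\<sigma> = restrict (\<lambda>p. SOME x. x \<in> S \<and> (\<forall>y\<in>S. G p y \<le> G p x)) E"
  have \<sigma>: "\<sigma> p \<in> S \<and> (\<forall>y\<in>S. G p y \<le> G p (\<sigma> p))" if "p \<in> E" for p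
    using someI_ex[OF assms[OF that, unfolded Bex_def]] that by (simp add: \<sigma>_def)
  have "\<sigma> \<in> E \<rightarrow>\<^sub>E S" using \<sigma> by (simp add: \<sigma>_def)
  moreover have "(\<Sum>p\<in>E. G p (\<pi> p)) \<le> (\<Sum>p\<in>E. G p (\<sigma> p))" if "\<pi> \<in> E \<rightarrow>\<^sub>E S" for \<pi>
    using that \<sigma> by (intro sum_mono) auto
  ultimately show ?thesis by blast
qed

lemma PiE_sum_argmax_coordinatewise:
  fixes G :: "'a \<Rightarrow> 'b \<Rightarrow> real"
  assumes "finite E" and "\<sigma> \<in> E \<rightarrow>\<^sub>E S"
    and max: "\<forall>\<pi>\<in>E \<rightarrow>\<^sub>E S. (\<Sum>p\<in>E. G p (\<pi> p)) \<le> (\<Sum>p\<in>E. G p (\<sigma> p))"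
    and "p \<in> E" and "x \<in> S"
  shows "G p x \<le> G p (\<sigma> p)"
proof -
  have "\<sigma>(p := x) \<in> E \<rightarrow>\<^sub>E S"
    using assms(2,4,5) by (auto simp: PiE_iff extensional_def)
  then have "(\<Sum>q\<in>E. G q ((\<sigma>(p := x)) q)) \<le> (\<Sum>q\<in>E. G q (\<sigma> q))"
    using max by blast
  moreover have split: "(\<Sum>q\<in>E. G q (f q)) = G p (f p) + (\<Sum>q\<in>E - {p}. G q (f q))"
    for f :: "'a \<Rightarrow> 'b"
    using assms(1,4) by (simp add: sum.remove)
  ultimately show ?thesis by (simp add: split[of "\<sigma>(p := x)"] split[of \<sigma>])
qed

theorem lemma3p2:
  fixes E :: "(real^'n) set" and \<mu> :: "nat \<Rightarrow> real^'n"
    and P :: "((real^'n) \<times> (real^'n)) pmf"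
  assumes n2: "CARD('n) \<ge> 2"
    and finE: "finite E" and E_sub: "E \<subseteq> open_simplex"
    and mu_E: "\<forall>t. \<mu> t \<in> E"
    and P_supp: "set_pmf P \<subseteq> E \<times> E"
    and conv: "weak_conv_on (E \<times> E) (\<lambda>t. emp_measure \<mu> (Suc t)) P"
  shows "(\<forall>\<pi>\<in>portfolio_maps E.
            (\<lambda>t. ln (rel_value \<pi> \<mu> t) / real t) \<longlonglongrightarrow>
               measure_pmf.expectation P (\<lambda>(p, q). ell \<pi> p q))
       \<and> (\<exists>\<pi>s\<in>portfolio_maps E. \<forall>\<pi>\<in>portfolio_maps E. growth \<pi> \<mu> \<le> growth \<pi>s \<mu>)
       \<and> (\<forall>\<pi>s\<in>portfolio_maps E. (\<forall>\<pi>\<in>portfolio_maps E. growth \<pi> \<mu> \<le> growth \<pi>s \<mu>) \<longrightarrow>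
            (\<forall>p\<in>E. pmf (map_pmf fst P) p > 0 \<longrightarrow>
               \<pi>s p \<in> closed_simplex \<and>
               (\<forall>x\<in>closed_simplex.
                  measure_pmf.expectation (cond_second P p) (\<lambda>q. ln (x \<bullet> vratio q p))
                  \<le> measure_pmf.expectation (cond_second P p) (\<lambda>q. ln (\<pi>s p \<bullet> vratio q p)))))"
  (is "?limit \<and> ?exists \<and> ?optimal")
proof -
  let ?G = "row_growth P E"
  have limit: ?limit
    using log_rel_value_tendsto_expectation_ell[OF finE E_sub] mu_E conv by blast
  have growth: "growth \<pi> \<mu> = (\<Sum>p\<in>E. ?G p (\<pi> p))" if "\<pi> \<in> portfolio_maps E" for \<pi>
    using limit that limI expectation_ell_eq_sum_row_growth[OF finE P_supp]
    unfolding growth_def by metis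
  have "\<exists>x\<in>closed_simplex. \<forall>y\<in>closed_simplex. ?G p y \<le> ?G p x" if "p \<in> E" for p
    using continuous_attains_sup[OF compact_closed_simplex closed_simplex_nonempty
        continuous_on_row_growth[OF E_sub that]] .
  then have ?exists
    using PiE_sum_argmax_exists[of E closed_simplex ?G] growth by (simp add: portfolio_maps_def)
  moreover have ?optimal
  proof (intro ballI impI conjI)
    fix \<sigma> p assume \<sigma>: "\<sigma> \<in> portfolio_maps E"
      and max: "\<forall>\<pi>\<in>portfolio_maps E. growth \<pi> \<mu> \<le> growth \<sigma> \<mu>"
      and p: "p \<in> E" and pos: "pmf (map_pmf fst P) p > 0"
    then show "\<sigma> p \<in> closed_simplex" by (auto simp: portfolio_maps_def)
    fix x :: "real^'n" assume x: "x \<in> closed_simplex"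
    have "?G p x \<le> ?G p (\<sigma> p)"
      using PiE_sum_argmax_coordinatewise[OF finE, of \<sigma> closed_simplex ?G p x] \<sigma> max growth p x
      by (simp add: portfolio_maps_def)
    then show "measure_pmf.expectation (cond_second P p) (\<lambda>q. ln (x \<bullet> vratio q p))
          \<le> measure_pmf.expectation (cond_second P p) (\<lambda>q. ln (\<sigma> p \<bullet> vratio q p))"
      using pos by (simp add: expectation_cond_second[OF finE P_supp pos] row_growth_def
          divide_right_mono)
  qed
  ultimately show ?thesis using limit by blast
qed

end
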